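(* Let $T$ be a ring and $x\in U(T)$. If $R$ is an $x$-conch subring of $T$, then $x^{-1}$ is contained in exactly one prime ideal of $R$, and this prime ideal is maximal; that is, $\sqrt{x^{-1}R}\in\mathrm{Max}(R)$.
   Context: All rings are commutative with $1\neq0$ and subrings are unital. For a unit $x\in T$, a subring $R$ of $T$ is an $x$-conch subring (conches $x$ in $T$) if $x^{-1}\in R$, $x\notin R$, and $R$ is maximal with respect to inclusion among subrings of $T$ containing $x^{-1}$ but not $x$. *)

theory Defs
  imports "HOL-Algebra.Algebra"
begin

definition conch_subring :: "('a, 'b) ring_scheme \<Rightarrow> 'a \<Rightarrow> 'a set \<Rightarrow> bool" where
  "conch_subring T x R \<longleftrightarrow>
     x \<in> Units T \<and> subring R T \<and> inv\<^bsub>T\<^esub> x \<in> R \<and> x \<notin> R \<and>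
     (\<forall>S. subring S T \<and> inv\<^bsub>T\<^esub> x \<in> S \<and> x \<notin> S \<and> R \<subseteq> S \<longrightarrow> S = R)"

definition ideal_radical :: "('a, 'b) ring_scheme \<Rightarrow> 'a set \<Rightarrow> 'a set" where
  "ideal_radical A I = {a \<in> carrier A. \<exists>n::nat. a [^]\<^bsub>A\<^esub> n \<in> I}"

end

theory Submission
  imports Defs
begin

text \<open>Write \<open>u = x\<inverse>\<close>. Everything rests on a dichotomy for \<open>a \<in> R\<close>: either some power
  of \<open>a\<close> lies in \<open>uR\<close>, or \<open>aR + uR = R\<close>. Given it, a prime containing \<open>u\<close> contains
  \<open>\<surd>(uR)\<close> and no element comaximal with \<open>u\<close>, so it equals \<open>\<surd>(uR)\<close>; and a maximal ideal
  over \<open>uR\<close>, which exists by Zorn, is such a prime.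

  For the dichotomy assume \<open>a\<^sup>k x \<notin> R\<close> for all \<open>k\<close>. The subring
  \<open>{t \<in> T. a\<^sup>k t \<in> R for some k}\<close> contains \<open>R\<close> but not \<open>x\<close>, so by maximality it is \<open>R\<close>:
  \<open>R\<close> is closed under division by \<open>a\<close> inside \<open>T\<close>. Next, \<open>ax \<notin> R\<close>, and the subring
  \<open>R + (aR :\<^sub>T u\<^sup>\<infinity>)\<close> contains \<open>ax\<close>, so it contains \<open>x\<close>: \<open>u\<^sup>k (x - r) \<in> aR\<close> for some
  \<open>r \<in> R\<close>. Then \<open>z = 1 - ru = u (x - r) \<in> R\<close> satisfies \<open>u\<^sup>k z \<in> aR\<close>, and division by \<open>a\<close>
  strips the powers of \<open>u\<close> one at a time (\<open>u\<^sup>n\<^sup>+\<^sup>1 z = ab\<close> gives \<open>u\<^sup>n z = a(xb) \<in> R\<close>,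
  hence \<open>xb \<in> R\<close>), so \<open>z \<in> aR\<close>, i.e. \<open>1 \<in> aR + uR\<close>.\<close>

lemma (in ring) exists_maximalideal_superset:
  assumes "ideal I R" and "\<one> \<notin> I"
  shows "\<exists>M. maximalideal M R \<and> I \<subseteq> M"
proof -
  define S where "S = {J. ideal J R \<and> I \<subseteq> J \<and> \<one> \<notin> J}"
  have "\<exists>M\<in>S. \<forall>J\<in>S. M \<subseteq> J \<longrightarrow> J = M"
  proof (rule subset_Zorn)
    fix C assume C: "subset.chain S C"
    show "\<exists>U\<in>S. \<forall>J\<in>C. J \<subseteq> U"
    proof (cases "C = {}")
      case True
      then show ?thesis using assms by (auto simp: S_def)
    next
      case False
      have "subset.chain {J. ideal J R} C"
        using C unfolding pred_on.chain_def S_def by auto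
      then have "ideal (\<Union>C) R" using chain_Union_is_ideal[of C] False by simp
      moreover have "I \<subseteq> \<Union>C" and "\<one> \<notin> \<Union>C"
        using C False unfolding pred_on.chain_def S_def by blast+
      ultimately show ?thesis unfolding S_def by auto
    qed
  qed
  then obtain M where M: "M \<in> S" and M_max: "\<And>J. J \<in> S \<Longrightarrow> M \<subseteq> J \<Longrightarrow> J = M"
    by blast
  have "maximalideal M R"
  proof (rule maximalidealI)
    show "ideal M R" and "carrier R \<noteq> M" using M by (auto simp: S_def)
    fix J assume J: "ideal J R" "M \<subseteq> J" "J \<subseteq> carrier R"
    show "J = M \<or> J = carrier R"
    proof (cases "\<one> \<in> J")
      case True
      then show ?thesis using ideal.one_imp_carrier[OF J(1)] by simp
    next
      case False
      then have "J \<in> S" using J M by (auto simp: S_def)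
      then show ?thesis using M_max J(2) by blast
    qed
  qed
  then show ?thesis using M by (auto simp: S_def)
qed

lemma (in primeideal) nat_pow_mem_imp_mem:
  assumes "a \<in> carrier R" and "a [^] (n::nat) \<in> I"
  shows "a \<in> I"
  using assms(2)
proof (induction n)
  case 0
  then show ?case using one_imp_carrier I_notcarr by simp
next
  case (Suc n)
  then show ?case using I_prime[of "a [^] n" a] assms(1) by auto
qed

lemma (in cring) ideal_radical_subset_primeideal:
  assumes "primeideal Q R" and "I \<subseteq> Q"
  shows "ideal_radical R I \<subseteq> Q"
  using primeideal.nat_pow_mem_imp_mem[OF assms(1)] assms(2)
  unfolding ideal_radical_def by blast

lemma (in cring) primeideal_over_eq_radical:
  assumes I: "ideal I R"
    and comaximal: "\<And>a. a \<in> carrier R \<Longrightarrow> a \<notin> ideal_radical R I \<Longrightarrow>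
                        \<exists>c\<in>carrier R. \<exists>i\<in>I. a \<otimes> c \<oplus> i = \<one>"
    and Q: "primeideal Q R" and IQ: "I \<subseteq> Q"
  shows "Q = ideal_radical R I"
proof
  show "ideal_radical R I \<subseteq> Q" using ideal_radical_subset_primeideal[OF Q IQ] .
  interpret Q: primeideal Q R by (rule Q)
  show "Q \<subseteq> ideal_radical R I"
  proof
    fix a assume aQ: "a \<in> Q"
    show "a \<in> ideal_radical R I"
    proof (rule ccontr)
      assume "a \<notin> ideal_radical R I"
      then obtain c i where c: "c \<in> carrier R" and i: "i \<in> I" and eq: "a \<otimes> c \<oplus> i = \<one>"
        using comaximal aQ Q.Icarr by blast
      have "a \<otimes> c \<oplus> i \<in> Q" using aQ c i IQ by (simp add: Q.I_r_closed Q.a_closed subsetD)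
      then show False using eq Q.one_imp_carrier Q.I_notcarr by simp
    qed
  qed
qed

lemma (in cring) unique_primeideal_over:
  assumes I: "ideal I R" and "\<one> \<notin> I"
    and comaximal: "\<And>a. a \<in> carrier R \<Longrightarrow> a \<notin> ideal_radical R I \<Longrightarrow>
                        \<exists>c\<in>carrier R. \<exists>i\<in>I. a \<otimes> c \<oplus> i = \<one>"
  shows "{Q. primeideal Q R \<and> I \<subseteq> Q} = {ideal_radical R I}"
    and "maximalideal (ideal_radical R I) R"
proof -
  obtain M where M: "maximalideal M R" and IM: "I \<subseteq> M"
    using exists_maximalideal_superset assms(1,2) by blast
  have "M = ideal_radical R I"
    using primeideal_over_eq_radical[OF I comaximal maximalideal_prime[OF M] IM] by blast
  then show "{Q. primeideal Q R \<and> I \<subseteq> Q} = {ideal_radical R I}"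
    and "maximalideal (ideal_radical R I) R"
    using primeideal_over_eq_radical[OF I comaximal] maximalideal_prime[OF M] M IM by blast+
qed

lemma (in cring) unique_primeideal_containing:
  assumes u: "u \<in> carrier R" and "\<one> \<notin> PIdl u"
    and comaximal: "\<And>a. a \<in> carrier R \<Longrightarrow> a \<notin> ideal_radical R (PIdl u) \<Longrightarrow>
                        \<exists>c\<in>carrier R. \<exists>r\<in>carrier R. a \<otimes> c \<oplus> r \<otimes> u = \<one>"
  shows "{Q. primeideal Q R \<and> u \<in> Q} = {ideal_radical R (PIdl u)}"
    and "maximalideal (ideal_radical R (PIdl u)) R"
proof -
  have "\<exists>c\<in>carrier R. \<exists>i\<in>PIdl u. a \<otimes> c \<oplus> i = \<one>"
    if a: "a \<in> carrier R" "a \<notin> ideal_radical R (PIdl u)" for a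
  proof -
    obtain c r where "c \<in> carrier R" "r \<in> carrier R" "a \<otimes> c \<oplus> r \<otimes> u = \<one>"
      using comaximal[OF a] by blast
    moreover have "r \<otimes> u \<in> PIdl u" unfolding cgenideal_def using \<open>r \<in> carrier R\<close> by blast
    ultimately show ?thesis by blast
  qed
  note unique = unique_primeideal_over[OF cgenideal_ideal[OF u] assms(2) this]
  have "u \<in> Q \<longleftrightarrow> PIdl u \<subseteq> Q" if "primeideal Q R" for Q
    using cgenideal_minimal[OF primeideal.axioms(1)[OF that]] cgenideal_self[OF u] by blast
  then have "{Q. primeideal Q R \<and> u \<in> Q} = {Q. primeideal Q R \<and> PIdl u \<subseteq> Q}"
    by auto
  then show "{Q. primeideal Q R \<and> u \<in> Q} = {ideal_radical R (PIdl u)}"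
    using unique(1) by simp
  show "maximalideal (ideal_radical R (PIdl u)) R" using unique(2) .
qed

lemma (in ring) subring_nat_pow_closed:
  assumes "subring S R" and "a \<in> S"
  shows "a [^] (n::nat) \<in> S"
  using assms(2) by (induction n) (simp_all add: subringE(3,6)[OF assms(1)])

lemma (in cring) saturation_subring:
  assumes S: "subring S R" and a: "a \<in> S"
  shows "subring {t \<in> carrier R. \<exists>k::nat. a [^] k \<otimes> t \<in> S} R" (is "subring ?Sat R")
proof (rule subringI)
  have ac: "a \<in> carrier R" using a subringE(1)[OF S] by blast
  show "?Sat \<subseteq> carrier R" by blast
  show "\<one> \<in> ?Sat"
    using subringE(3)[OF S] by (auto intro: exI[of _ 0])
  fix t1 t2 assume "t1 \<in> ?Sat" and "t2 \<in> ?Sat"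
  then obtain k l :: nat where t1: "t1 \<in> carrier R" "a [^] k \<otimes> t1 \<in> S"
    and t2: "t2 \<in> carrier R" "a [^] l \<otimes> t2 \<in> S" by blast
  have ak: "a [^] k \<in> carrier R" "a [^] k \<in> S" and al: "a [^] l \<in> carrier R" "a [^] l \<in> S"
    using ac a subring_nat_pow_closed[OF S] by auto
  have pow_add: "a [^] (k + l) = a [^] k \<otimes> a [^] l" using ac by (simp add: nat_pow_mult)
  have "a [^] k \<otimes> (\<ominus> t1) = \<ominus> (a [^] k \<otimes> t1)" using ak t1 by algebra
  then show "\<ominus> t1 \<in> ?Sat"
    using t1 subringE(5)[OF S] by (auto intro!: exI[of _ k])
  have "a [^] (k + l) \<otimes> (t1 \<otimes> t2) = (a [^] k \<otimes> t1) \<otimes> (a [^] l \<otimes> t2)"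
    unfolding pow_add using ak al t1 t2 by algebra
  then show "t1 \<otimes> t2 \<in> ?Sat"
    using t1 t2 subringE(6)[OF S] by (auto intro!: exI[of _ "k + l"])
  have "a [^] (k + l) \<otimes> (t1 \<oplus> t2) = a [^] l \<otimes> (a [^] k \<otimes> t1) \<oplus> a [^] k \<otimes> (a [^] l \<otimes> t2)"
    unfolding pow_add using ak al t1 t2 by algebra
  then show "t1 \<oplus> t2 \<in> ?Sat"
    using t1 t2 ak al subringE(6,7)[OF S] by (auto intro!: exI[of _ "k + l"])
qed

lemma (in cring) sum_with_colon_subring:
  assumes S: "subring S R" and u: "u \<in> S" and a: "a \<in> S"
  shows "subring {t \<in> carrier R. \<exists>r\<in>S. \<exists>k::nat. \<exists>b\<in>S. u [^] k \<otimes> (t \<ominus> r) = a \<otimes> b} R"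
    (is "subring ?E R")
proof (rule subringI)
  have SR: "S \<subseteq> carrier R" using subringE(1)[OF S] .
  have uc: "u \<in> carrier R" and ac: "a \<in> carrier R" using u a SR by auto
  have memI: "t \<in> ?E" if "t \<in> carrier R" "r \<in> S" "b \<in> S" "u [^] k \<otimes> (t \<ominus> r) = a \<otimes> b"
    for t r b and k :: nat
    using that by blast
  show "?E \<subseteq> carrier R" by blast
  have "u [^] (0::nat) \<otimes> (\<one> \<ominus> \<one>) = a \<otimes> \<zero>" using ac by simp
  then show "\<one> \<in> ?E" using memI subringE(2,3)[OF S] by blast
  fix t1 t2 assume "t1 \<in> ?E" and "t2 \<in> ?E"
  then obtain r1 r2 b1 b2 and k l :: nat
    where t: "t1 \<in> carrier R" "t2 \<in> carrier R" and rb: "r1 \<in> S" "r2 \<in> S" "b1 \<in> S" "b2 \<in> S"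
      and e1: "u [^] k \<otimes> (t1 \<ominus> r1) = a \<otimes> b1" and e2: "u [^] l \<otimes> (t2 \<ominus> r2) = a \<otimes> b2"
    by blast
  have rbc: "r1 \<in> carrier R" "r2 \<in> carrier R" "b1 \<in> carrier R" "b2 \<in> carrier R"
    using rb SR by auto
  have uk: "u [^] k \<in> carrier R" "u [^] k \<in> S" and ul: "u [^] l \<in> carrier R" "u [^] l \<in> S"
    using uc u subring_nat_pow_closed[OF S] by auto
  have pow_add: "u [^] (k + l) = u [^] k \<otimes> u [^] l" using uc by (simp add: nat_pow_mult)
  have "u [^] k \<otimes> (\<ominus> t1 \<ominus> \<ominus> r1) = \<ominus> (u [^] k \<otimes> (t1 \<ominus> r1))"
    using uk t rbc by algebra
  also have "\<dots> = a \<otimes> \<ominus> b1" unfolding e1 using ac rbc by algebra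
  finally show "\<ominus> t1 \<in> ?E" using memI[of "\<ominus> t1" "\<ominus> r1" "\<ominus> b1"] t rb subringE(5)[OF S] by simp
  have "u [^] (k + l) \<otimes> (t1 \<oplus> t2 \<ominus> (r1 \<oplus> r2))
      = u [^] l \<otimes> (u [^] k \<otimes> (t1 \<ominus> r1)) \<oplus> u [^] k \<otimes> (u [^] l \<otimes> (t2 \<ominus> r2))"
    unfolding pow_add using uk ul t rbc by algebra
  also have "\<dots> = a \<otimes> (u [^] l \<otimes> b1 \<oplus> u [^] k \<otimes> b2)"
    unfolding e1 e2 using uk ul ac rbc by algebra
  finally show "t1 \<oplus> t2 \<in> ?E"
    using memI[of "t1 \<oplus> t2" "r1 \<oplus> r2" "u [^] l \<otimes> b1 \<oplus> u [^] k \<otimes> b2"]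
      t rb uk ul subringE(6,7)[OF S] by simp
  have "u [^] (k + l) \<otimes> (t1 \<otimes> t2 \<ominus> r1 \<otimes> r2)
      = (u [^] k \<otimes> (t1 \<ominus> r1)) \<otimes> (u [^] l \<otimes> (t2 \<ominus> r2))
        \<oplus> r1 \<otimes> u [^] k \<otimes> (u [^] l \<otimes> (t2 \<ominus> r2)) \<oplus> r2 \<otimes> u [^] l \<otimes> (u [^] k \<otimes> (t1 \<ominus> r1))"
    unfolding pow_add using uk ul t rbc by algebra
  also have "\<dots> = a \<otimes> (a \<otimes> b1 \<otimes> b2 \<oplus> r1 \<otimes> u [^] k \<otimes> b2 \<oplus> r2 \<otimes> u [^] l \<otimes> b1)"
    unfolding e1 e2 using uk ul ac rbc by algebra
  finally show "t1 \<otimes> t2 \<in> ?E"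
    using memI[of "t1 \<otimes> t2" "r1 \<otimes> r2" "a \<otimes> b1 \<otimes> b2 \<oplus> r1 \<otimes> u [^] k \<otimes> b2 \<oplus> r2 \<otimes> u [^] l \<otimes> b1"]
      t rb uk ul a subringE(6,7)[OF S] by simp
qed

lemma conch_subring_mem_extension:
  assumes "conch_subring T x R" and "subring S T" and "R \<subseteq> S" and "S \<noteq> R"
  shows "x \<in> S"
  using assms unfolding conch_subring_def by blast

lemma (in cring) cancel_inv_pow_in_multiples:
  assumes x: "x \<in> Units R" and S: "subring S R" and u: "inv x \<in> S" and a: "a \<in> carrier R"
    and saturated: "\<And>t. t \<in> carrier R \<Longrightarrow> a \<otimes> t \<in> S \<Longrightarrow> t \<in> S"
    and z: "z \<in> S" and "b \<in> S" and "inv x [^] (n::nat) \<otimes> z = a \<otimes> b"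
  shows "\<exists>c\<in>S. z = a \<otimes> c"
  using assms(7,8)
proof (induction n arbitrary: b)
  case 0
  then have "z = a \<otimes> b" using z subringE(1)[OF S] by (simp add: subsetD)
  then show ?case using 0 by blast
next
  case (Suc n)
  have xc: "x \<in> carrier R" and uc: "inv x \<in> carrier R" and zc: "z \<in> carrier R"
    and bc: "b \<in> carrier R" using x z Suc.prems(1) subringE(1)[OF S] by auto
  have "inv x [^] n \<otimes> z = (x \<otimes> inv x) \<otimes> inv x [^] n \<otimes> z"
    using x uc zc by simp
  also have "\<dots> = x \<otimes> (inv x [^] Suc n \<otimes> z)"
    using xc uc zc by (simp add: m_ac)
  also have "\<dots> = a \<otimes> (x \<otimes> b)" unfolding Suc.prems(2) using xc a bc by algebra
  finally have e: "inv x [^] n \<otimes> z = a \<otimes> (x \<otimes> b)" .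
  have "a \<otimes> (x \<otimes> b) \<in> S"
    unfolding e[symmetric] using u z subring_nat_pow_closed[OF S] subringE(6)[OF S] by blast
  then have "x \<otimes> b \<in> S" using saturated xc bc by blast
  then show ?case using Suc.IH e by blast
qed

lemma (in cring) conch_subring_comaximal:
  assumes conch: "conch_subring R x S" and a: "a \<in> S"
    and not_rad: "\<And>k::nat. a [^] k \<otimes> x \<notin> S"
  shows "\<exists>c\<in>S. \<exists>r\<in>S. a \<otimes> c \<oplus> r \<otimes> inv x = \<one>"
proof -
  have x: "x \<in> Units R" and S: "subring S R" and u: "inv x \<in> S"
    using conch unfolding conch_subring_def by auto
  have SR: "S \<subseteq> carrier R" using subringE(1)[OF S] .
  have xc: "x \<in> carrier R" and uc: "inv x \<in> carrier R" and ac: "a \<in> carrier R"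
    using x u a SR by auto
  have saturated: "t \<in> S" if "t \<in> carrier R" "a \<otimes> t \<in> S" for t
  proof -
    let ?Sat = "{t \<in> carrier R. \<exists>k::nat. a [^] k \<otimes> t \<in> S}"
    have "S \<subseteq> ?Sat" using SR by (auto intro!: exI[of _ 0] simp: subsetD)
    moreover have "x \<notin> ?Sat" using not_rad by blast
    ultimately have "?Sat = S"
      using conch_subring_mem_extension[OF conch saturation_subring[OF S a]] by blast
    moreover have "t \<in> ?Sat" using that ac by (auto intro: exI[of _ 1])
    ultimately show ?thesis by blast
  qed
  let ?E = "{t \<in> carrier R. \<exists>r\<in>S. \<exists>k::nat. \<exists>b\<in>S. inv x [^] k \<otimes> (t \<ominus> r) = a \<otimes> b}"
  have memE: "t \<in> ?E"
    if "t \<in> carrier R" "r \<in> S" "b \<in> S" "inv x [^] k \<otimes> (t \<ominus> r) = a \<otimes> b" for t r b and k :: nat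
    using that by blast
  have "S \<subseteq> ?E"
  proof
    fix t assume t: "t \<in> S"
    then have "inv x [^] (0::nat) \<otimes> (t \<ominus> t) = a \<otimes> \<zero>" using SR ac by (simp add: subsetD)
    then show "t \<in> ?E" using memE[OF _ t subringE(2)[OF S]] t SR by blast
  qed
  moreover have "a \<otimes> x \<in> ?E - S"
  proof -
    have "inv x [^] Suc 0 \<otimes> (a \<otimes> x \<ominus> \<zero>) = a \<otimes> (x \<otimes> inv x)"
      using ac xc uc by (simp add: a_minus_def m_ac)
    also have "\<dots> = a \<otimes> \<one>" using x by simp
    finally have "a \<otimes> x \<in> ?E" using memE[OF _ subringE(2,3)[OF S]] ac xc by blast
    then show ?thesis using not_rad[of 1] ac by simp
  qed
  ultimately have "x \<in> ?E"
    using conch_subring_mem_extension[OF conch sum_with_colon_subring[OF S u a]] by blast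
  then obtain r b and k :: nat where r: "r \<in> S" and b: "b \<in> S"
    and e: "inv x [^] k \<otimes> (x \<ominus> r) = a \<otimes> b" by blast
  have rc: "r \<in> carrier R" and bc: "b \<in> carrier R" and uk: "inv x [^] k \<in> carrier R"
    using r b SR uc by auto
  have "inv x \<otimes> (x \<ominus> r) = x \<otimes> inv x \<ominus> r \<otimes> inv x" using xc uc rc by algebra
  then have z: "\<one> \<ominus> r \<otimes> inv x = inv x \<otimes> (x \<ominus> r)" using x by simp
  have "inv x [^] k \<otimes> (inv x \<otimes> (x \<ominus> r)) = inv x \<otimes> (inv x [^] k \<otimes> (x \<ominus> r))"
    using uk uc xc rc by algebra
  also have "\<dots> = a \<otimes> (inv x \<otimes> b)" unfolding e using uc ac bc by algebra
  finally have "inv x [^] k \<otimes> (\<one> \<ominus> r \<otimes> inv x) = a \<otimes> (inv x \<otimes> b)" unfolding z .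
  moreover have "\<one> \<ominus> r \<otimes> inv x \<in> S" and "inv x \<otimes> b \<in> S"
    unfolding a_minus_def using r u b subringE(3,5,6,7)[OF S] by auto
  ultimately obtain c where c: "c \<in> S" "\<one> \<ominus> r \<otimes> inv x = a \<otimes> c"
    using cancel_inv_pow_in_multiples[OF x S u ac saturated] by blast
  have "a \<otimes> c \<oplus> r \<otimes> inv x = (\<one> \<ominus> r \<otimes> inv x) \<oplus> r \<otimes> inv x" using c(2) by simp
  also have "\<dots> = \<one>" using rc uc by algebra
  finally show ?thesis using c(1) r by blast
qed

lemma (in cring) subring_cgenideal_inv_eq:
  assumes S: "subring S R" and x: "x \<in> Units R" and u: "inv x \<in> S"
  shows "PIdl\<^bsub>R\<lparr>carrier := S\<rparr>\<^esub> (inv x) = {y \<in> carrier R. y \<otimes> x \<in> S}"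
proof -
  have xc: "x \<in> carrier R" and uc: "inv x \<in> carrier R" using x by auto
  have "y \<otimes> inv x \<otimes> x = y" if "y \<in> carrier R" for y
    using that x xc uc by (simp add: m_assoc)
  moreover have "y \<otimes> x \<otimes> inv x = y" if "y \<in> carrier R" for y
    using that x xc uc by (simp add: m_assoc)
  ultimately show ?thesis
    unfolding cgenideal_def using subringE(1)[OF S] xc uc by (auto simp: subsetD) (metis m_closed)
qed

theorem corollary1p2:
  fixes T :: "('a, 'b) ring_scheme" and x :: 'a and R :: "'a set"
  assumes "cring T" and "\<one>\<^bsub>T\<^esub> \<noteq> \<zero>\<^bsub>T\<^esub>"
    and "x \<in> Units T"
    and "conch_subring T x R"
  shows "\<exists>P. {Q. primeideal Q (T\<lparr>carrier := R\<rparr>) \<and> inv\<^bsub>T\<^esub> x \<in> Q} = {P}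
            \<and> maximalideal P (T\<lparr>carrier := R\<rparr>)
            \<and> ideal_radical (T\<lparr>carrier := R\<rparr>) (PIdl\<^bsub>T\<lparr>carrier := R\<rparr>\<^esub> (inv\<^bsub>T\<^esub> x)) = P"
proof -
  interpret T: cring T by (rule assms(1))
  have R: "subring R T" and u: "inv\<^bsub>T\<^esub> x \<in> R" and "x \<notin> R"
    using assms(4) unfolding conch_subring_def by auto
  interpret A: cring "T\<lparr>carrier := R\<rparr>"
    using T.subcring_iff[OF subringE(1)[OF R]] T.subcringI'[OF R] by simp
  note PIdl_eq = T.subring_cgenideal_inv_eq[OF R assms(3) u]
  have "\<one>\<^bsub>T\<^esub> \<notin> PIdl\<^bsub>T\<lparr>carrier := R\<rparr>\<^esub> (inv\<^bsub>T\<^esub> x)"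
    unfolding PIdl_eq using \<open>x \<notin> R\<close> assms(3) by auto
  moreover have "\<exists>c\<in>R. \<exists>r\<in>R. a \<otimes>\<^bsub>T\<^esub> c \<oplus>\<^bsub>T\<^esub> r \<otimes>\<^bsub>T\<^esub> inv\<^bsub>T\<^esub> x = \<one>\<^bsub>T\<^esub>"
    if "a \<in> R" "a \<notin> ideal_radical (T\<lparr>carrier := R\<rparr>) (PIdl\<^bsub>T\<lparr>carrier := R\<rparr>\<^esub> (inv\<^bsub>T\<^esub> x))" for a
    using T.conch_subring_comaximal[OF assms(4)] that subringE(1)[OF R]
    unfolding PIdl_eq ideal_radical_def T.nat_pow_consistent[symmetric] by auto
  ultimately show ?thesis
    using A.unique_primeideal_containing[of "inv\<^bsub>T\<^esub> x"] u by auto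
qed

end
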